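(* Let $m\in[0,1]$, $n=\sqrt{1-m^2}$, and for $k\in[-\pi,\pi]$ define $\omega(k,m)=\arccos(n\cos k)\in[0,\pi]$, $\omega_{\rm D}=\sqrt{k^2+m^2}$, $v=\partial_k\omega=\frac{n\sin k}{\sin\omega}$, $v_{\rm D}=\frac{k}{\sqrt{k^2+m^2}}$, and $$\alpha(k,m):=\omega_{\rm D}-\omega,\qquad \beta(k,m):=\tfrac12\Big(1-v\,v_{\rm D}-\sqrt{(1-v^2)(1-v_{\rm D}^2)}\Big).$$ Let $0\le\bar k<\pi$. Then for every $m\in[0,1]$, $$\max_{k\in[-\bar k,\bar k]}|\alpha(k,m)|=\max_{k\in\{0,\bar k\}}|\alpha(k,m)|,\qquad \max_{k\in[-\bar k,\bar k]}|\beta(k,m)|=\max_{k\in\{0,\bar k\}}|\beta(k,m)|.$$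
   Context: $\omega$ is the dispersion relation of the one-dimensional Dirac quantum cellular automaton with mass parameter $m$, $\omega_{\rm D}$ the Dirac dispersion relation (Planck units), and $v$, $v_{\rm D}$ the corresponding group velocities. *)

theory Defs
  imports Complex_Main
begin

definition qca_n :: "real \<Rightarrow> real" where
  "qca_n m = sqrt (1 - m\<^sup>2)"

definition qca_omega :: "real \<Rightarrow> real \<Rightarrow> real" where
  "qca_omega k m = arccos (qca_n m * cos k)"

definition dirac_omega :: "real \<Rightarrow> real \<Rightarrow> real" where
  "dirac_omega k m = sqrt (k\<^sup>2 + m\<^sup>2)"

definition qca_v :: "real \<Rightarrow> real \<Rightarrow> real" where
  "qca_v k m = qca_n m * sin k / sin (qca_omega k m)"

definition dirac_v :: "real \<Rightarrow> real \<Rightarrow> real" where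
  "dirac_v k m = k / sqrt (k\<^sup>2 + m\<^sup>2)"

definition alpha :: "real \<Rightarrow> real \<Rightarrow> real" where
  "alpha k m = dirac_omega k m - qca_omega k m"

definition beta :: "real \<Rightarrow> real \<Rightarrow> real" where
  "beta k m = (1 - qca_v k m * dirac_v k m
      - sqrt ((1 - (qca_v k m)\<^sup>2) * (1 - (dirac_v k m)\<^sup>2))) / 2"

end

theory Submission
  imports Defs
begin

text \<open>Both \<open>\<alpha>\<close> and \<open>\<beta>\<close> are even in \<open>k\<close> and nondecreasing on \<open>[0, \<pi>)\<close>, so on
  \<open>[-r, r]\<close> with \<open>r < \<pi>\<close> their values lie between those at \<open>0\<close> and at \<open>r\<close>, and \<open>|\<alpha>|\<close>, \<open>|\<beta>|\<close> attain their
  maxima at one of these two points.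
  For \<open>\<alpha>\<close> one has \<open>\<alpha>' = v\<^sub>D - v\<close>, and \<open>v \<le> v\<^sub>D\<close> because both velocities have the
  form \<open>x / \<surd>(x\<^sup>2 + m\<^sup>2)\<close>, with \<open>x = n sin k\<close> resp. \<open>x = k\<close>, and \<open>n sin k \<le> k\<close>.
  For \<open>\<beta>\<close> (with \<open>m > 0\<close>) write \<open>v = sin \<theta>\<close>, \<open>v\<^sub>D = sin \<theta>\<^sub>D\<close> with \<open>\<theta> = arctan (n sin k / m)\<close>
  and \<open>\<theta>\<^sub>D = arctan (k / m)\<close>; then \<open>\<beta> = (1 - cos (\<theta>\<^sub>D - \<theta>)) / 2\<close>, and \<open>\<theta>\<^sub>D - \<theta>\<close> is
  nondecreasing because \<open>n cos k (k\<^sup>2 + m\<^sup>2) \<le> m\<^sup>2 + n\<^sup>2 sin\<^sup>2 k\<close>. This last inequality follows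
  from the Taylor bounds \<open>1 - k\<^sup>2/2 \<le> cos k\<close> and \<open>k\<^sup>2 cos k \<le> sin\<^sup>2 k\<close> (for \<open>0 \<le> k \<le> 2\<close>).\<close>

lemma cos_ge_one_minus_sq_half: "1 - x\<^sup>2 / 2 \<le> cos (x::real)"
proof -
  have "1 - x\<^sup>2 / 2 \<le> cos x" if "0 \<le> x" for x :: real
  proof -
    have "(\<lambda>t. cos t - 1 + t\<^sup>2 / 2) 0 \<le> (\<lambda>t. cos t - 1 + t\<^sup>2 / 2) x"
    proof (rule DERIV_nonneg_imp_nondecreasing[OF that])
      fix t :: real assume "0 \<le> t"
      then show "\<exists>y. ((\<lambda>t. cos t - 1 + t\<^sup>2 / 2) has_real_derivative y) (at t) \<and> 0 \<le> y"
        by (intro exI[of _ "t - sin t"]) (auto intro!: derivative_eq_intros simp: sin_x_le_x)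
    qed
    then show ?thesis by simp
  qed
  from this[of x] this[of "-x"] show ?thesis by (cases "0 \<le> x") auto
qed

lemma sin_ge_x_minus_cube: "0 \<le> x \<Longrightarrow> x - x ^ 3 / 6 \<le> sin (x::real)"
proof -
  assume "0 \<le> x"
  have "(\<lambda>t. sin t - t + t ^ 3 / 6) 0 \<le> (\<lambda>t. sin t - t + t ^ 3 / 6) x"
  proof (rule DERIV_nonneg_imp_nondecreasing[OF \<open>0 \<le> x\<close>])
    fix t :: real
    show "\<exists>y. ((\<lambda>t. sin t - t + t ^ 3 / 6) has_real_derivative y) (at t) \<and> 0 \<le> y"
      using cos_ge_one_minus_sq_half[of t]
      by (intro exI[of _ "cos t - 1 + t\<^sup>2 / 2"]) (auto intro!: derivative_eq_intros)
  qed
  then show ?thesis by simp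
qed

lemma cos_le_taylor_quartic: "cos (x::real) \<le> 1 - x\<^sup>2 / 2 + x ^ 4 / 24"
proof -
  have "cos x \<le> 1 - x\<^sup>2 / 2 + x ^ 4 / 24" if "0 \<le> x" for x :: real
  proof -
    have "(\<lambda>t. 1 - t\<^sup>2 / 2 + t ^ 4 / 24 - cos t) 0 \<le> (\<lambda>t. 1 - t\<^sup>2 / 2 + t ^ 4 / 24 - cos t) x"
    proof (rule DERIV_nonneg_imp_nondecreasing[OF that])
      fix t :: real assume "0 \<le> t"
      then show "\<exists>y. ((\<lambda>t. 1 - t\<^sup>2 / 2 + t ^ 4 / 24 - cos t) has_real_derivative y) (at t) \<and> 0 \<le> y"
        using sin_ge_x_minus_cube[of t]
        by (intro exI[of _ "sin t - t + t ^ 3 / 6"]) (auto intro!: derivative_eq_intros)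
    qed
    then show ?thesis by simp
  qed
  from this[of x] this[of "-x"] show ?thesis by (cases "0 \<le> x") auto
qed

lemma sq_mult_cos_le_sin_sq:
  fixes x :: real
  assumes "0 \<le> x" "x \<le> 2"
  shows "x\<^sup>2 * cos x \<le> (sin x)\<^sup>2"
proof -
  have x2: "x\<^sup>2 \<le> 4" using assms power_mono[of x 2 2] by simp
  have "0 \<le> x - x ^ 3 / 6"
    using assms x2 mult_nonneg_nonneg[of x "1 - x\<^sup>2 / 6"] by (simp add: algebra_simps power2_eq_square power3_eq_cube)
  then have "(x - x ^ 3 / 6)\<^sup>2 \<le> (sin x)\<^sup>2"
    using sin_ge_x_minus_cube[OF assms(1)] by (simp add: power_mono)
  moreover have "x\<^sup>2 * cos x \<le> x\<^sup>2 * (1 - x\<^sup>2 / 2 + x ^ 4 / 24)"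
    using cos_le_taylor_quartic[of x] by (simp add: mult_left_mono)
  moreover have "(x - x ^ 3 / 6)\<^sup>2 - x\<^sup>2 * (1 - x\<^sup>2 / 2 + x ^ 4 / 24) = x ^ 4 * (12 - x\<^sup>2) / 72"
    by (simp add: algebra_simps power2_eq_square power3_eq_cube power4_eq_xxxx)
  moreover have "0 \<le> x ^ 4 * (12 - x\<^sup>2) / 72" using x2 by simp
  ultimately show ?thesis by linarith
qed

lemma mult_cos_mass_le_one_minus_sq:
  fixes k n :: real
  assumes k: "0 \<le> k" "k < pi" and n: "0 \<le> n" "n \<le> 1"
  shows "n * cos k * (1 - n\<^sup>2 + k\<^sup>2) \<le> 1 - (n * cos k)\<^sup>2"
proof (cases "cos k \<le> 0")
  case True
  have "n\<^sup>2 \<le> 1" using n power_mono[of n 1 2] by simp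
  moreover have "(cos k)\<^sup>2 \<le> 1" by (simp add: abs_square_le_1)
  ultimately have "(n * cos k)\<^sup>2 \<le> 1"
    using mult_mono[of "n\<^sup>2" 1 "(cos k)\<^sup>2" 1] by (simp add: power_mult_distrib)
  moreover have "n * cos k * (1 - n\<^sup>2 + k\<^sup>2) \<le> 0"
    using True n \<open>n\<^sup>2 \<le> 1\<close> by (intro mult_nonpos_nonneg mult_nonneg_nonpos) auto
  ultimately show ?thesis by linarith
next
  case False
  define c where "c = cos k"
  have c: "0 < c" using False c_def by simp
  have "k < pi / 2"
    using cos_monotone_0_pi_le[of "pi / 2" k] k c c_def by force
  then have "k\<^sup>2 * c \<le> 1 - c\<^sup>2"
    using sq_mult_cos_le_sin_sq[of k] k pi_half_less_two sin_squared_eq[of k] c_def by simp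
  moreover have "0 \<le> k\<^sup>2 + c * (1 + n) - n - n\<^sup>2"
  proof -
    have "(1 - k\<^sup>2 / 2) * (1 + n) \<le> c * (1 + n)"
      using cos_ge_one_minus_sq_half[of k] n c_def by (intro mult_right_mono) auto
    moreover have "(1 - k\<^sup>2 / 2) * (1 + n) - n - n\<^sup>2 + k\<^sup>2 = k\<^sup>2 * (1 - n) / 2 + (1 - n) * (1 + n)"
      by (simp add: field_simps power2_eq_square)
    moreover have "0 \<le> k\<^sup>2 * (1 - n) / 2 + (1 - n) * (1 + n)" using n by simp
    ultimately show ?thesis by linarith
  qed
  then have "0 \<le> (1 - n) * c * (k\<^sup>2 + c * (1 + n) - n - n\<^sup>2)" using c n by simp
  moreover have "1 - (n * c)\<^sup>2 - n * c * (1 - n\<^sup>2 + k\<^sup>2)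
      = (1 - c\<^sup>2 - k\<^sup>2 * c) + (1 - n) * c * (k\<^sup>2 + c * (1 + n) - n - n\<^sup>2)"
    by (simp add: algebra_simps power2_eq_square)
  ultimately show ?thesis unfolding c_def by linarith
qed

lemma qca_n_bounds: "0 \<le> m \<Longrightarrow> m \<le> 1 \<Longrightarrow> 0 \<le> qca_n m \<and> qca_n m \<le> 1"
  using power_mono[of m 1 2] by (simp add: qca_n_def)

lemma qca_n_sq: "0 \<le> m \<Longrightarrow> m \<le> 1 \<Longrightarrow> (qca_n m)\<^sup>2 = 1 - m\<^sup>2"
  using power_mono[of m 1 2] by (simp add: qca_n_def)

lemma abs_qca_n_cos_le_one: "0 \<le> m \<Longrightarrow> m \<le> 1 \<Longrightarrow> \<bar>qca_n m * cos k\<bar> \<le> 1"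
  using qca_n_bounds[of m] mult_mono[of "\<bar>qca_n m\<bar>" 1 "\<bar>cos k\<bar>" 1] by (simp add: abs_mult)

lemma one_minus_qca_n_cos_sq:
  "0 \<le> m \<Longrightarrow> m \<le> 1 \<Longrightarrow> 1 - (qca_n m * cos k)\<^sup>2 = (qca_n m * sin k)\<^sup>2 + m\<^sup>2"
  using qca_n_sq[of m] sin_cos_squared_add[of k] by algebra

lemma sin_qca_omega:
  "0 \<le> m \<Longrightarrow> m \<le> 1 \<Longrightarrow> sin (qca_omega k m) = sqrt ((qca_n m * sin k)\<^sup>2 + m\<^sup>2)"
  by (simp add: qca_omega_def sin_arccos_abs abs_qca_n_cos_le_one one_minus_qca_n_cos_sq)

lemma qca_v_eq:
  "0 \<le> m \<Longrightarrow> m \<le> 1 \<Longrightarrow> qca_v k m = qca_n m * sin k / sqrt ((qca_n m * sin k)\<^sup>2 + m\<^sup>2)"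
  by (simp add: qca_v_def sin_qca_omega)

lemma divide_sqrt_sq_add_mono:
  fixes a b c :: real
  assumes "a \<le> b" "0 \<le> c"
  shows "a / sqrt (a\<^sup>2 + c) \<le> b / sqrt (b\<^sup>2 + c)"
proof -
  have nonneg: "x / sqrt (x\<^sup>2 + c) \<le> y / sqrt (y\<^sup>2 + c)" if "0 \<le> x" "x \<le> y" for x y :: real
  proof (cases "x\<^sup>2 + c = 0")
    case False
    have "x\<^sup>2 \<le> y\<^sup>2" using that by (simp add: power_mono)
    have pos: "0 < x\<^sup>2 + c" using False \<open>0 \<le> c\<close> zero_le_power2[of x] by linarith
    have sq: "(z / sqrt (z\<^sup>2 + c))\<^sup>2 = 1 - c / (z\<^sup>2 + c)" if "0 < z\<^sup>2 + c" for z :: real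
      using that by (simp add: power_divide diff_divide_eq_iff)
    have "c / (y\<^sup>2 + c) \<le> c / (x\<^sup>2 + c)"
      using pos \<open>x\<^sup>2 \<le> y\<^sup>2\<close> \<open>0 \<le> c\<close> by (intro divide_left_mono) (auto simp: add_pos_nonneg)
    moreover have "0 < y\<^sup>2 + c" using pos \<open>x\<^sup>2 \<le> y\<^sup>2\<close> by linarith
    ultimately have "(x / sqrt (x\<^sup>2 + c))\<^sup>2 \<le> (y / sqrt (y\<^sup>2 + c))\<^sup>2"
      unfolding sq[OF pos] by (simp only: sq)
    moreover have "0 \<le> y / sqrt (y\<^sup>2 + c)"
      using that \<open>0 \<le> c\<close> by (intro divide_nonneg_nonneg) auto
    ultimately show ?thesis by (rule power2_le_imp_le)
  next
    case True
    then have "x\<^sup>2 = 0" using \<open>0 \<le> c\<close> zero_le_power2[of x] by linarith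
    moreover have "0 \<le> y / sqrt (y\<^sup>2 + c)"
      using that \<open>0 \<le> c\<close> by (intro divide_nonneg_nonneg) auto
    ultimately show ?thesis by simp
  qed
  consider "0 \<le> a" | "b \<le> 0" | "a < 0" "0 < b" by linarith
  then show ?thesis
  proof cases
    case 2
    then show ?thesis using nonneg[of "-b" "-a"] assms by simp
  next
    case 3
    then have "a / sqrt (a\<^sup>2 + c) \<le> 0" using assms(2) by (intro divide_nonpos_nonneg) auto
    also have "0 \<le> b / sqrt (b\<^sup>2 + c)" using 3 assms(2) by (intro divide_nonneg_nonneg) auto
    finally show ?thesis .
  qed (rule nonneg[OF _ assms(1)])
qed

lemma qca_v_le_dirac_v: "0 \<le> m \<Longrightarrow> m \<le> 1 \<Longrightarrow> 0 \<le> k \<Longrightarrow> qca_v k m \<le> dirac_v k m"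
proof -
  assume m: "0 \<le> m" "m \<le> 1" and "0 \<le> k"
  have "qca_n m * sin k \<le> \<bar>sin k\<bar>"
    using qca_n_bounds[OF m] abs_mult[of "qca_n m" "sin k"] mult_right_mono[of "qca_n m" 1 "\<bar>sin k\<bar>"]
    by (auto simp: abs_le_iff)
  also have "\<dots> \<le> k" using abs_sin_x_le_abs_x[of k] \<open>0 \<le> k\<close> by simp
  finally show ?thesis
    using divide_sqrt_sq_add_mono[of _ k "m\<^sup>2"] m by (simp add: qca_v_eq dirac_v_def)
qed

lemma alpha_has_real_derivative:
  assumes m: "0 \<le> m" "m \<le> 1" and k: "0 < k" "k < pi"
  shows "((\<lambda>k. alpha k m) has_real_derivative dirac_v k m - qca_v k m) (at k)"
proof -
  define n where "n = qca_n m"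
  have "(cos k)\<^sup>2 < 1"
    using sin_gt_zero[OF k] by (simp add: cos_squared_eq)
  then have "\<bar>cos k\<bar> < 1" by (simp add: abs_square_less_1)
  then have "\<bar>n * cos k\<bar> < 1"
    using qca_n_bounds[OF m] mult_right_mono[of n 1 "\<bar>cos k\<bar>"] by (simp add: n_def abs_mult)
  then have ncos: "- 1 < n * cos k" "n * cos k < 1" by linarith+
  have "0 < k\<^sup>2 + m\<^sup>2" using k by (simp add: add_pos_nonneg)
  have "((\<lambda>k. sqrt (k\<^sup>2 + m\<^sup>2)) has_real_derivative k / sqrt (k\<^sup>2 + m\<^sup>2)) (at k)"
    using \<open>0 < k\<^sup>2 + m\<^sup>2\<close> by (auto intro!: derivative_eq_intros simp: field_simps)
  moreover have "((\<lambda>k. arccos (n * cos k)) has_real_derivative n * sin k / sqrt (1 - (n * cos k)\<^sup>2)) (at k)"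
    using ncos by (auto intro!: derivative_eq_intros simp: field_simps)
  ultimately show ?thesis
    unfolding alpha_def dirac_omega_def qca_omega_def dirac_v_def qca_v_def
    using ncos by (auto intro: DERIV_diff[THEN DERIV_cong] simp: sin_arccos n_def)
qed

lemma alpha_mono:
  assumes m: "0 \<le> m" "m \<le> 1" and ab: "0 \<le> a" "a \<le> b" "b < pi"
  shows "alpha a m \<le> alpha b m"
proof (rule DERIV_nonneg_imp_increasing_open[OF \<open>a \<le> b\<close>])
  fix k assume "a < k" "k < b"
  then show "\<exists>y. ((\<lambda>k. alpha k m) has_real_derivative y) (at k) \<and> 0 \<le> y"
    using alpha_has_real_derivative[OF m, of k] qca_v_le_dirac_v[OF m, of k] ab by auto
next
  show "continuous_on {a..b} (\<lambda>k. alpha k m)"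
    unfolding alpha_def dirac_omega_def qca_omega_def
    using abs_qca_n_cos_le_one[OF m] by (intro continuous_intros) (auto simp: abs_le_iff)
qed

lemma sin_arctan_divide: "0 < m \<Longrightarrow> sin (arctan (a / m)) = a / sqrt (a\<^sup>2 + m\<^sup>2)"
proof -
  assume "0 < m"
  then have "sqrt (1 + (a / m)\<^sup>2) = sqrt (a\<^sup>2 + m\<^sup>2) / m"
    by (simp add: power_divide field_simps real_sqrt_divide)
  then show ?thesis using \<open>0 < m\<close> by (simp add: sin_arctan)
qed

lemma sin_mult_sin_add_sqrt_eq_cos_diff:
  fixes x y :: real
  assumes "0 \<le> cos x" "0 \<le> cos y"
  shows "sin x * sin y + sqrt ((1 - (sin x)\<^sup>2) * (1 - (sin y)\<^sup>2)) = cos (y - x)"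
proof -
  have "sqrt ((1 - (sin x)\<^sup>2) * (1 - (sin y)\<^sup>2)) = cos x * cos y"
    using assms by (simp add: cos_squared_eq[symmetric] power_mult_distrib[symmetric])
  then show ?thesis by (simp add: cos_diff)
qed

text \<open>The angle \<open>\<theta>\<^sub>D - \<theta>\<close> with \<open>v = sin \<theta>\<close>, \<open>v\<^sub>D = sin \<theta>\<^sub>D\<close>; only meaningful for \<open>m > 0\<close>
  (at \<open>m = 0\<close> both quotients are \<open>0\<close>).\<close>

definition velocity_angle_gap :: "real \<Rightarrow> real \<Rightarrow> real" where
  "velocity_angle_gap k m = arctan (k / m) - arctan (qca_n m * sin k / m)"

lemma beta_eq_one_minus_cos_gap:
  assumes "0 < m" "m \<le> 1"
  shows "beta k m = (1 - cos (velocity_angle_gap k m)) / 2"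
proof -
  have "qca_v k m = sin (arctan (qca_n m * sin k / m))"
    using assms by (simp add: qca_v_eq sin_arctan_divide)
  moreover have "dirac_v k m = sin (arctan (k / m))"
    using assms by (simp add: dirac_v_def sin_arctan_divide)
  ultimately show ?thesis
    using sin_mult_sin_add_sqrt_eq_cos_diff[of "arctan (qca_n m * sin k / m)" "arctan (k / m)"]
    by (simp add: beta_def velocity_angle_gap_def cos_arctan diff_diff_eq)
qed

lemma arctan_divide_has_real_derivative:
  assumes "0 < m" "(f has_real_derivative f') (at k)"
  shows "((\<lambda>k. arctan (f k / m)) has_real_derivative m * f' / ((f k)\<^sup>2 + m\<^sup>2)) (at k)"
proof -
  have "((\<lambda>k. arctan (f k / m)) has_real_derivative inverse (1 + (f k / m)\<^sup>2) * (f' / m)) (at k)"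
    using assms by (auto intro!: DERIV_chain2[OF DERIV_arctan] derivative_eq_intros)
  moreover have "inverse (1 + (f k / m)\<^sup>2) * (f' / m) = m * f' / ((f k)\<^sup>2 + m\<^sup>2)"
    using assms(1) by (simp add: power_divide field_simps power2_eq_square)
  ultimately show ?thesis by simp
qed

lemma velocity_angle_gap_has_real_derivative:
  assumes "0 < m"
  shows "((\<lambda>k. velocity_angle_gap k m) has_real_derivative
      m / (k\<^sup>2 + m\<^sup>2) - m * (qca_n m * cos k) / ((qca_n m * sin k)\<^sup>2 + m\<^sup>2)) (at k)"
proof -
  have "((\<lambda>k. qca_n m * sin k) has_real_derivative qca_n m * cos k) (at k)"
    by (auto intro!: derivative_eq_intros)
  from DERIV_diff[OF arctan_divide_has_real_derivative[OF assms DERIV_ident]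
      arctan_divide_has_real_derivative[OF assms this]]
  show ?thesis by (simp add: velocity_angle_gap_def)
qed

lemma velocity_angle_gap_mono:
  assumes m: "0 < m" "m \<le> 1" and ab: "0 \<le> a" "a \<le> b" "b < pi"
  shows "velocity_angle_gap a m \<le> velocity_angle_gap b m"
proof (rule DERIV_nonneg_imp_nondecreasing[OF \<open>a \<le> b\<close>])
  fix k assume "a \<le> k" "k \<le> b"
  then have k: "0 \<le> k" "k < pi" using ab by auto
  define n where "n = qca_n m"
  have "n * cos k * (k\<^sup>2 + m\<^sup>2) = n * cos k * (1 - n\<^sup>2 + k\<^sup>2)"
    using qca_n_sq[of m] m by (simp add: n_def)
  also have "\<dots> \<le> 1 - (n * cos k)\<^sup>2"
    using mult_cos_mass_le_one_minus_sq[OF k] qca_n_bounds[of m] m by (simp add: n_def)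
  also have "\<dots> = (n * sin k)\<^sup>2 + m\<^sup>2"
    using one_minus_qca_n_cos_sq[of m k] m by (simp add: n_def)
  finally have "n * cos k * (k\<^sup>2 + m\<^sup>2) \<le> (n * sin k)\<^sup>2 + m\<^sup>2" .
  then have "m * (n * cos k) * (k\<^sup>2 + m\<^sup>2) \<le> m * ((n * sin k)\<^sup>2 + m\<^sup>2)"
    using m by (simp add: mult.assoc mult_left_mono)
  moreover have "0 < k\<^sup>2 + m\<^sup>2" "0 < (n * sin k)\<^sup>2 + m\<^sup>2" using m by (simp_all add: add_nonneg_pos)
  ultimately have "m * (n * cos k) / ((n * sin k)\<^sup>2 + m\<^sup>2) \<le> m / (k\<^sup>2 + m\<^sup>2)"
    by (simp add: field_simps)
  then show "\<exists>y. ((\<lambda>k. velocity_angle_gap k m) has_real_derivative y) (at k) \<and> 0 \<le> y"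
    using velocity_angle_gap_has_real_derivative[OF m(1), of k] by (auto simp: n_def)
qed

lemma beta_zero_mass: "0 \<le> k \<Longrightarrow> k < pi \<Longrightarrow> beta k 0 = 0"
proof -
  assume k: "0 \<le> k" "k < pi"
  have "qca_omega k 0 = k" using k by (simp add: qca_omega_def qca_n_def arccos_cos)
  moreover have "0 < sin k" if "k \<noteq> 0" using k that by (intro sin_gt_zero) auto
  ultimately show ?thesis using k
    by (cases "k = 0") (auto simp: beta_def qca_v_def dirac_v_def qca_n_def)
qed

lemma beta_mono:
  assumes m: "0 \<le> m" "m \<le> 1" and ab: "0 \<le> a" "a \<le> b" "b < pi"
  shows "beta a m \<le> beta b m"
proof (cases "m = 0")
  case True
  then show ?thesis using beta_zero_mass ab by simp
next
  case False
  then have "0 < m" using m by simp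
  have "0 \<le> velocity_angle_gap a m"
    using velocity_angle_gap_mono[OF \<open>0 < m\<close> m(2), of 0 a] ab by (simp add: velocity_angle_gap_def)
  moreover have "velocity_angle_gap b m < pi"
    using arctan_ubound[of "b / m"] arctan_lbound[of "qca_n m * sin b / m"]
    by (simp add: velocity_angle_gap_def)
  ultimately have "cos (velocity_angle_gap b m) \<le> cos (velocity_angle_gap a m)"
    using velocity_angle_gap_mono[OF \<open>0 < m\<close> m(2) ab] by (intro cos_monotone_0_pi_le) auto
  then show ?thesis
    by (simp add: beta_eq_one_minus_cos_gap[OF \<open>0 < m\<close> m(2)] divide_right_mono)
qed

lemma alpha_minus: "alpha (- k) m = alpha k m"
  by (simp add: alpha_def dirac_omega_def qca_omega_def)

lemma beta_minus: "beta (- k) m = beta k m"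
  by (simp add: beta_def qca_v_def qca_omega_def dirac_v_def)

lemma SUP_abs_even_mono_eq_max:
  fixes f :: "real \<Rightarrow> real"
  assumes "0 \<le> r" and even: "\<And>k. f (- k) = f k"
    and mono: "\<And>a b. 0 \<le> a \<Longrightarrow> a \<le> b \<Longrightarrow> b \<le> r \<Longrightarrow> f a \<le> f b"
  shows "(SUP k\<in>{-r..r}. \<bar>f k\<bar>) = max \<bar>f 0\<bar> \<bar>f r\<bar>"
proof (rule cSup_eq_maximum)
  show "max \<bar>f 0\<bar> \<bar>f r\<bar> \<in> (\<lambda>k. \<bar>f k\<bar>) ` {-r..r}"
    using \<open>0 \<le> r\<close> by (cases "\<bar>f 0\<bar> \<le> \<bar>f r\<bar>") (auto simp: max_def)
next
  fix y assume "y \<in> (\<lambda>k. \<bar>f k\<bar>) ` {-r..r}"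
  then obtain k where "k \<in> {-r..r}" and y: "y = \<bar>f k\<bar>" by blast
  then have "\<bar>k\<bar> \<le> r" by auto
  have "f k = f \<bar>k\<bar>" using even[of k] by (simp add: abs_if)
  have "f 0 \<le> f \<bar>k\<bar>" "f \<bar>k\<bar> \<le> f r" using mono \<open>\<bar>k\<bar> \<le> r\<close> by simp_all
  then show "y \<le> max \<bar>f 0\<bar> \<bar>f r\<bar>" unfolding y \<open>f k = f \<bar>k\<bar>\<close> by linarith
qed

theorem lemma2:
  fixes kb m :: real
  assumes "0 \<le> kb" and "kb < pi" and "0 \<le> m" and "m \<le> 1"
  shows "(SUP k\<in>{-kb..kb}. \<bar>alpha k m\<bar>) = max \<bar>alpha 0 m\<bar> \<bar>alpha kb m\<bar>
     \<and> (SUP k\<in>{-kb..kb}. \<bar>beta k m\<bar>) = max \<bar>beta 0 m\<bar> \<bar>beta kb m\<bar>"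
proof
  show "(SUP k\<in>{-kb..kb}. \<bar>alpha k m\<bar>) = max \<bar>alpha 0 m\<bar> \<bar>alpha kb m\<bar>"
    using assms by (intro SUP_abs_even_mono_eq_max alpha_minus alpha_mono) auto
  show "(SUP k\<in>{-kb..kb}. \<bar>beta k m\<bar>) = max \<bar>beta 0 m\<bar> \<bar>beta kb m\<bar>"
    using assms by (intro SUP_abs_even_mono_eq_max beta_minus beta_mono) auto
qed

end
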